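(* Let $T>0$ and $K>0$. Assume that $|c(y)(0)|\le K$ for every $c\in\mathcal{C}$, that the density $\rho$ is nonincreasing, and that $$\rho(T)\ge d\qquad\text{and}\qquad K\le\bar F(T).$$ Then $\mathbb{E}[|\mathcal{H}(\mathcal{T}_{t,c})|]\le 1$ for all $c\in\mathcal{C}$ and all $t\in[0,T]$; in particular the integrability hypothesis $\sup_{c\in\mathcal{C},\,t\in[0,T]}\mathbb{E}[|\mathcal{H}(\mathcal{T}_{t,c})|]<\infty$ holds.
   Context: Let $d\ge1$ and let $f=(f_1,\ldots,f_d):\mathbb{R}^d\to\mathbb{R}^d$ with each $f_i$ smooth ($C^\infty$) and Lipschitz; $y(0)\in\mathbb{R}^d$ is a fixed initial condition. Write $\partial_j=\partial/\partial y_j$. For $g:\mathbb{R}^d\to\mathbb{R}$, $g^*$ sends a path $y:\mathbb{R}_+\to\mathbb{R}^d$ to $t\mapsto g(y(t))$; ${\rm Id}_i$ sends $y\mapsto y_i$. Codes: $\mathcal{C}=\{{\rm Id}_i:1\le i\le d\}\cup\{(\partial_1^{i_1}\cdots\partial_d^{i_d}f_i)^*: i_1,\ldots,i_d\ge0,\ 1\le i\le d\}$ (formal symbols). Mechanism: $\mathcal{M}({\rm Id}_i)=\{(f_i^* )\}$ and $\mathcal{M}(g^* )=\{(f_1^*,(\partial_1g)^* ),\ldots,(f_d^*,(\partial_dg)^* )\}$. The value $c(y)(0)$ is $y_i(0)$ if $c={\rm Id}_i$ and $g(y(0))$ if $c=g^*$. Random coding tree: fix a probability density $\rho:\mathbb{R}_+\to(0,\infty)$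 with tail $\bar F(t)=\int_t^\infty\rho(u)\,du$. For $t\ge0$ and $c\in\mathcal{C}$, $\mathcal{T}_{t,c}$ is the branching particle system started at time $0$ by one particle with code $c$: each particle $k$, with code $c_k$ born at time $T_{k-}$, has an independent lifetime $\tau_k$ of density $\rho$. If $T_{k-}+\tau_k>t$ the particle is a leaf (set $\mathcal{K}^\partial$). Otherwise it dies at $T_k=T_{k-}+\tau_k\le t$ (set $\mathcal{K}^\circ$), an independent tuple $I_k$ is drawn uniformly in $\mathcal{M}(c_k)$, with probability $q_{c_k}(I_k)=1/|\mathcal{M}(c_k)|$, and the particle is replaced by $|I_k|$ offspring born at $T_k$ carrying the codes listed in $I_k$, evolving independently by the same rule. The functional is $$\mathcal{H}(\mathcal{T}_{t,c})=\prod_{k\in\mathcal{K}^\circ}\frac{1}{q_{c_k}(I_k)\,\rho(T_k-T_{k-})}\prod_{k\in\mathcal{K}^\partial}\frac{c_k(y)(0)}{\bar F(t-T_{k-})}.$$ *)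

theory Defs
  imports "HOL-Probability.Probability"
begin

definition pd :: "'d::finite \<Rightarrow> (real^'d \<Rightarrow> real) \<Rightarrow> real^'d \<Rightarrow> real" where
  "pd j g y = deriv (\<lambda>s. g (y + s *\<^sub>R axis j 1)) 0"

primrec pdiffs :: "'d::finite list \<Rightarrow> (real^'d \<Rightarrow> real) \<Rightarrow> real^'d \<Rightarrow> real" where
  "pdiffs [] g = g"
| "pdiffs (j # xs) g = pd j (pdiffs xs g)"

definition smooth :: "(real^'d::finite \<Rightarrow> real) \<Rightarrow> bool" where
  "smooth g \<longleftrightarrow> (\<forall>xs y. pdiffs xs g differentiable (at y))"

text \<open>Id i  is Id_i;  Der m i  is (d^m f_i)^*, m the multiset of differentiation directions.\<close>
datatype 'd code = Id 'd | Der "'d multiset" 'd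

text \<open>The mechanism M(c) as a list of tuples; for Der codes the tuple is selected by j.\<close>
fun mech :: "'d code \<Rightarrow> 'd \<Rightarrow> 'd code list" where
  "mech (Id i) j = [Der {#} i]"
| "mech (Der m i) j = [Der {#} j, Der (add_mset j m) i]"

text \<open>Cardinality of M(c); q_c(I) = 1 / mcard c.\<close>
fun mcard :: "'d::finite code \<Rightarrow> nat" where
  "mcard (Id i) = 1"
| "mcard (Der m i) = CARD('d)"

fun code_val :: "(real^'d \<Rightarrow> real^'d) \<Rightarrow> real^'d \<Rightarrow> 'd::finite code \<Rightarrow> real" where
  "code_val f y0 (Id i) = y0 $ i"
| "code_val f y0 (Der m i) = pdiffs (SOME xs. mset xs = m) (\<lambda>y. f y $ i) y0"

definition Fbar :: "(real \<Rightarrow> real) \<Rightarrow> real \<Rightarrow> real" where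
  "Fbar \<rho> t = integral {t..} \<rho>"

definition lifetime :: "(real \<Rightarrow> real) \<Rightarrow> real measure" where
  "lifetime \<rho> = density lborel (\<lambda>x. ennreal (indicator {0..} x * \<rho> x))"

text \<open>Underlying probability space: i.i.d. (lifetime, uniform index) attached to each
  Ulam-Harris label (child k of node u is labelled k # u).\<close>
definition Omega :: "(real \<Rightarrow> real) \<Rightarrow> (nat list \<Rightarrow> real \<times> 'd::finite) measure" where
  "Omega \<rho> = PiM UNIV (\<lambda>_. lifetime \<rho> \<Otimes>\<^sub>M measure_pmf (pmf_of_set UNIV))"

text \<open>node t c w u = Some (code, birth time) if particle u exists in T_{t,c}.\<close>
primrec node :: "real \<Rightarrow> 'd code \<Rightarrow> (nat list \<Rightarrow> real \<times> 'd) \<Rightarrow> nat list \<Rightarrow> ('d code \<times> real) option" where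
  "node t c w [] = Some (c, 0)"
| "node t c w (k # u) =
     (case node t c w u of
        None \<Rightarrow> None
      | Some (c', b) \<Rightarrow>
          if b + fst (w u) \<le> t \<and> k < length (mech c' (snd (w u)))
          then Some (mech c' (snd (w u)) ! k, b + fst (w u)) else None)"

definition nodes :: "real \<Rightarrow> 'd code \<Rightarrow> (nat list \<Rightarrow> real \<times> 'd) \<Rightarrow> nat list set" where
  "nodes t c w = {u. node t c w u \<noteq> None}"

definition ncode :: "real \<Rightarrow> 'd code \<Rightarrow> (nat list \<Rightarrow> real \<times> 'd) \<Rightarrow> nat list \<Rightarrow> 'd code" where
  "ncode t c w u = fst (the (node t c w u))"

definition nbirth :: "real \<Rightarrow> 'd code \<Rightarrow> (nat list \<Rightarrow> real \<times> 'd) \<Rightarrow> nat list \<Rightarrow> real" where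
  "nbirth t c w u = snd (the (node t c w u))"

definition interior :: "real \<Rightarrow> 'd code \<Rightarrow> (nat list \<Rightarrow> real \<times> 'd) \<Rightarrow> nat list set" where
  "interior t c w = {u \<in> nodes t c w. nbirth t c w u + fst (w u) \<le> t}"

definition leaves :: "real \<Rightarrow> 'd code \<Rightarrow> (nat list \<Rightarrow> real \<times> 'd) \<Rightarrow> nat list set" where
  "leaves t c w = {u \<in> nodes t c w. nbirth t c w u + fst (w u) > t}"

text \<open>The functional H(T_{t,c}); set to 0 on the (null) event of an infinite tree.\<close>
definition Hfun :: "(real^'d \<Rightarrow> real^'d) \<Rightarrow> real^'d \<Rightarrow> (real \<Rightarrow> real) \<Rightarrow> real \<Rightarrow> 'd::finite code
                   \<Rightarrow> (nat list \<Rightarrow> real \<times> 'd) \<Rightarrow> real" where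
  "Hfun f y0 \<rho> t c w =
    (if finite (nodes t c w) then
       (\<Prod>u\<in>interior t c w. 1 / ((1 / real (mcard (ncode t c w u))) * \<rho> (fst (w u))))
     * (\<Prod>u\<in>leaves t c w. code_val f y0 (ncode t c w u) / Fbar \<rho> (t - nbirth t c w u))
     else 0)"

end

theory Submission
  imports Defs
begin

text \<open>Every factor of \<open>\<H>\<close> has modulus at most one, pointwise on the almost sure event that all
  lifetimes are nonnegative. A dying particle contributes \<open>|\<M>(c)| / \<rho>(\<tau>) \<le> d / \<rho>(T) \<le> 1\<close>, since its
  lifetime \<open>\<tau>\<close> is at most \<open>t \<le> T\<close> and \<open>\<rho>\<close> is nonincreasing; a leaf born at time \<open>b\<close> contributes
  \<open>|c(y)(0)| / Fbar(t - b) \<le> K / Fbar(T) \<le> 1\<close>, since the tail \<open>Fbar\<close> is nonincreasing. Hence \<open>|\<H>| \<le> 1\<close> and its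
  expectation is at most one.\<close>

lemma integrable_on_tail:
  fixes \<rho> :: "real \<Rightarrow> real"
  assumes nonneg: "\<forall>t\<ge>0. 0 \<le> \<rho> t" and int: "\<rho> integrable_on {0..}" and "0 \<le> s"
  shows "\<rho> integrable_on {s..}"
proof -
  have "\<rho> absolutely_integrable_on {0..}"
    using int nonneg by (intro nonnegative_absolutely_integrable) auto
  then have "\<rho> absolutely_integrable_on {s..}"
    by (rule set_integrable_subset) (use \<open>0 \<le> s\<close> in auto)
  then show ?thesis
    using set_lebesgue_integral_eq_integral(1) by blast
qed

lemma Fbar_antimono:
  fixes \<rho> :: "real \<Rightarrow> real"
  assumes nonneg: "\<forall>t\<ge>0. 0 \<le> \<rho> t" and int: "\<rho> integrable_on {0..}"
    and "0 \<le> s" "s \<le> t"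
  shows "Fbar \<rho> t \<le> Fbar \<rho> s"
  unfolding Fbar_def
  using assms integrable_on_tail[OF nonneg int] by (intro integral_subset_le) auto

lemma borel_measurable_lifetime_density:
  fixes \<rho> :: "real \<Rightarrow> real"
  assumes noninc: "\<forall>s t. 0 \<le> s \<longrightarrow> s \<le> t \<longrightarrow> \<rho> t \<le> \<rho> s"
  shows "(\<lambda>x. ennreal (indicator {0..} x * \<rho> x)) \<in> borel_measurable lborel"
proof -
  have "mono (\<lambda>x. - \<rho> (max x 0))"
    unfolding mono_def using noninc by (auto simp: max_def)
  then have "(\<lambda>x. - \<rho> (max x 0)) \<in> borel_measurable borel"
    by (rule borel_measurable_mono)
  then have "(\<lambda>x. indicator {0..} x * - (- \<rho> (max x 0))) \<in> borel_measurable borel"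
    by measurable
  moreover have "(\<lambda>x. indicator {0..} x * - (- \<rho> (max x 0))) = (\<lambda>x. indicator {0..} x * \<rho> x :: real)"
    by (auto simp: fun_eq_iff split: split_indicator)
  ultimately show ?thesis
    by simp
qed

lemma prob_space_lifetime:
  fixes \<rho> :: "real \<Rightarrow> real"
  assumes nonneg: "\<forall>t\<ge>0. 0 \<le> \<rho> t" and dens: "(\<rho> has_integral 1) {0..}"
    and noninc: "\<forall>s t. 0 \<le> s \<longrightarrow> s \<le> t \<longrightarrow> \<rho> t \<le> \<rho> s"
  shows "prob_space (lifetime \<rho>)"
proof (rule prob_spaceI)
  have "emeasure (lifetime \<rho>) (space (lifetime \<rho>))
      = (\<integral>\<^sup>+ x. ennreal (indicator {0..} x * \<rho> x) * indicator UNIV x \<partial>lborel)"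
    unfolding lifetime_def using borel_measurable_lifetime_density[OF noninc]
    by (subst emeasure_density) auto
  also have "\<dots> = (\<integral>\<^sup>+ x. ennreal (\<rho> x) * indicator {0..} x \<partial>lborel)"
    by (rule nn_integral_cong) (auto split: split_indicator)
  also have "\<dots> = 1"
    using nn_integral_has_integral_lebesgue'[OF _ dens] nonneg by auto
  finally show "emeasure (lifetime \<rho>) (space (lifetime \<rho>)) = 1" .
qed

lemma prob_space_Omega:
  assumes "prob_space (lifetime \<rho>)"
  shows "prob_space (Omega \<rho> :: (nat list \<Rightarrow> real \<times> 'd::finite) measure)"
  unfolding Omega_def
  by (intro prob_space_PiM prob_space_pair assms prob_space_measure_pmf)

lemma AE_lifetime_nonneg:
  fixes \<rho> :: "real \<Rightarrow> real"
  assumes noninc: "\<forall>s t. 0 \<le> s \<longrightarrow> s \<le> t \<longrightarrow> \<rho> t \<le> \<rho> s"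
  shows "AE x in lifetime \<rho>. 0 \<le> x"
  unfolding lifetime_def
  by (subst AE_density[OF borel_measurable_lifetime_density[OF noninc]])
     (auto split: split_indicator)

lemma AE_Omega_lifetimes_nonneg:
  assumes prob: "prob_space (lifetime \<rho>)" and nonneg: "AE x in lifetime \<rho>. 0 \<le> x"
  shows "AE w in (Omega \<rho> :: (nat list \<Rightarrow> real \<times> 'd::finite) measure). \<forall>u. 0 \<le> fst (w u)"
proof -
  let ?P = "lifetime \<rho> \<Otimes>\<^sub>M measure_pmf (pmf_of_set (UNIV :: 'd set))"
  have P: "prob_space ?P"
    by (rule prob_space_pair[OF prob prob_space_measure_pmf])
  have "AE x in ?P. 0 \<le> fst x"
  proof (rule AE_distrD[where f = fst and M' = "lifetime \<rho>"])
    show "fst \<in> ?P \<rightarrow>\<^sub>M lifetime \<rho>"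
      by measurable
    show "AE x in distr ?P (lifetime \<rho>) fst. 0 \<le> x"
      using prob_space.distr_pair_fst[OF prob_space_measure_pmf[of "pmf_of_set (UNIV :: 'd set)"], of "lifetime \<rho>"] nonneg
      by (simp only:)
  qed
  then have "AE w in (Omega \<rho> :: (nat list \<Rightarrow> real \<times> 'd) measure). 0 \<le> fst (w u)" for u
    unfolding Omega_def
    by (rule AE_PiM_component[OF P UNIV_I])
  then show ?thesis
    by (simp add: AE_all_countable)
qed

lemma node_birth_bounds:
  assumes "\<forall>u. 0 \<le> fst (w u)" "0 \<le> t" "node t c w u = Some (c', b)"
  shows "0 \<le> b \<and> b \<le> t"
  using assms(3)
proof (induction u arbitrary: c' b)
  case Nil
  then show ?case using assms(2) by auto
next
  case (Cons k u)
  then show ?case using assms(1) by (auto split: option.splits if_splits)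
qed

lemma nbirth_bounds:
  assumes "\<forall>u. 0 \<le> fst (w u)" "0 \<le> t" "u \<in> nodes t c w"
  shows "0 \<le> nbirth t c w u \<and> nbirth t c w u \<le> t"
  using assms node_birth_bounds[OF assms(1,2)] by (auto simp: nodes_def nbirth_def)

lemma mcard_le_card: "mcard (c :: 'd::finite code) \<le> CARD('d)"
  by (cases c) (auto simp: Suc_le_eq)

lemma abs_interior_weight_le_1:
  fixes \<rho> :: "real \<Rightarrow> real" and c :: "'d::finite code"
  assumes rho_pos: "\<forall>t\<ge>0. \<rho> t > 0"
    and noninc: "\<forall>s t. 0 \<le> s \<longrightarrow> s \<le> t \<longrightarrow> \<rho> t \<le> \<rho> s"
    and rho_T: "\<rho> T \<ge> real CARD('d)"
    and w: "\<forall>u. 0 \<le> fst (w u)" and t: "0 \<le> t" "t \<le> T"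
    and u: "u \<in> interior t c w"
  shows "\<bar>1 / ((1 / real (mcard (ncode t c w u))) * \<rho> (fst (w u)))\<bar> \<le> 1"
proof -
  let ?m = "real (mcard (ncode t c w u))" and ?r = "\<rho> (fst (w u))"
  have "0 \<le> nbirth t c w u" "nbirth t c w u + fst (w u) \<le> t"
    using u nbirth_bounds[OF w t(1)] by (auto simp: interior_def)
  then have "fst (w u) \<le> T"
    using t by linarith
  then have "\<rho> T \<le> ?r"
    using noninc w by auto
  then have "?m \<le> ?r"
    using rho_T mcard_le_card[of "ncode t c w u"] by linarith
  moreover have "0 < ?r"
    using rho_pos w by auto
  ultimately show ?thesis
    by simp
qed

lemma abs_leaf_weight_le_1:
  fixes \<rho> :: "real \<Rightarrow> real"
  assumes nonneg: "\<forall>t\<ge>0. 0 \<le> \<rho> t" and int: "\<rho> integrable_on {0..}"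
    and K_pos: "K > 0" and val_bound: "\<forall>c. \<bar>code_val f y0 c\<bar> \<le> K"
    and K_T: "K \<le> Fbar \<rho> T"
    and w: "\<forall>u. 0 \<le> fst (w u)" and t: "0 \<le> t" "t \<le> T"
    and u: "u \<in> leaves t c w"
  shows "\<bar>code_val f y0 (ncode t c w u) / Fbar \<rho> (t - nbirth t c w u)\<bar> \<le> 1"
proof -
  let ?v = "code_val f y0 (ncode t c w u)" and ?F = "Fbar \<rho> (t - nbirth t c w u)"
  have "0 \<le> t - nbirth t c w u" "t - nbirth t c w u \<le> T"
    using u t nbirth_bounds[OF w t(1), where u = u and c = c] by (auto simp: leaves_def)
  then have "Fbar \<rho> T \<le> ?F"
    by (rule Fbar_antimono[OF nonneg int])
  then have F: "K \<le> ?F"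
    using K_T by linarith
  moreover have "\<bar>?v\<bar> \<le> K"
    using val_bound by auto
  ultimately have "\<bar>?v\<bar> / ?F \<le> 1"
    using K_pos by simp
  then show ?thesis
    using F K_pos by simp
qed

lemma abs_Hfun_le_1:
  fixes \<rho> :: "real \<Rightarrow> real" and c :: "'d::finite code"
  assumes rho_pos: "\<forall>t\<ge>0. \<rho> t > 0" and int: "\<rho> integrable_on {0..}"
    and noninc: "\<forall>s t. 0 \<le> s \<longrightarrow> s \<le> t \<longrightarrow> \<rho> t \<le> \<rho> s"
    and K_pos: "K > 0" and val_bound: "\<forall>c. \<bar>code_val f y0 c\<bar> \<le> K"
    and rho_T: "\<rho> T \<ge> real CARD('d)" and K_T: "K \<le> Fbar \<rho> T"
    and w: "\<forall>u. 0 \<le> fst (w u)" and t: "0 \<le> t" "t \<le> T"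
  shows "\<bar>Hfun f y0 \<rho> t c w\<bar> \<le> 1"
proof -
  have nonneg: "\<forall>t\<ge>0. 0 \<le> \<rho> t"
    using rho_pos by (simp add: less_imp_le)
  have "\<bar>\<Prod>u\<in>interior t c w. 1 / ((1 / real (mcard (ncode t c w u))) * \<rho> (fst (w u)))\<bar> \<le> 1"
    unfolding abs_prod
    using abs_interior_weight_le_1[OF rho_pos noninc rho_T w t] by (intro prod_le_1) auto
  moreover have "\<bar>\<Prod>u\<in>leaves t c w. code_val f y0 (ncode t c w u) / Fbar \<rho> (t - nbirth t c w u)\<bar> \<le> 1"
    unfolding abs_prod
    using abs_leaf_weight_le_1[OF nonneg int K_pos val_bound K_T w t] by (intro prod_le_1) auto
  ultimately show ?thesis
    unfolding Hfun_def
    by (cases "finite (nodes t c w)")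
       (simp_all only: if_True if_False abs_mult abs_zero mult_le_one abs_ge_zero zero_le_one)
qed

theorem proposition1:
  fixes f :: "real^'d::finite \<Rightarrow> real^'d" and y0 :: "real^'d"
    and \<rho> :: "real \<Rightarrow> real" and T K :: real
  assumes smooth_f: "\<forall>i. smooth (\<lambda>y. f y $ i)"
    and lip_f: "\<forall>i. \<exists>L. L-lipschitz_on UNIV (\<lambda>y. f y $ i)"
    and rho_pos: "\<forall>t\<ge>0. \<rho> t > 0"
    and rho_dens: "(\<rho> has_integral 1) {0..}"
    and rho_noninc: "\<forall>s t. 0 \<le> s \<longrightarrow> s \<le> t \<longrightarrow> \<rho> t \<le> \<rho> s"
    and T_pos: "T > 0" and K_pos: "K > 0"
    and val_bound: "\<forall>c. \<bar>code_val f y0 c\<bar> \<le> K"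
    and rho_T: "\<rho> T \<ge> real CARD('d)"
    and K_T: "K \<le> Fbar \<rho> T"
  shows "(\<forall>c t. 0 \<le> t \<longrightarrow> t \<le> T \<longrightarrow>
            (\<integral>\<^sup>+ w. ennreal \<bar>Hfun f y0 \<rho> t c w\<bar> \<partial>Omega \<rho>) \<le> 1)
       \<and> (SUP c. SUP t\<in>{0..T}. \<integral>\<^sup>+ w. ennreal \<bar>Hfun f y0 \<rho> t c w\<bar> \<partial>Omega \<rho>) < \<infinity>"
proof -
  have lifetime: "prob_space (lifetime \<rho>)"
    using rho_pos rho_dens rho_noninc by (intro prob_space_lifetime) (auto simp: less_imp_le)
  interpret Omega: prob_space "Omega \<rho> :: (nat list \<Rightarrow> real \<times> 'd) measure"
    by (rule prob_space_Omega[OF lifetime])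
  have AE_nonneg: "AE w in (Omega \<rho> :: (nat list \<Rightarrow> real \<times> 'd) measure). \<forall>u. 0 \<le> fst (w u)"
    by (rule AE_Omega_lifetimes_nonneg[OF lifetime AE_lifetime_nonneg[OF rho_noninc]])
  have int: "\<rho> integrable_on {0..}"
    using rho_dens by blast
  have bound: "(\<integral>\<^sup>+ w. ennreal \<bar>Hfun f y0 \<rho> t c w\<bar> \<partial>Omega \<rho>) \<le> 1"
    if "0 \<le> t" "t \<le> T" for c :: "'d code" and t
  proof -
    have "AE w in Omega \<rho>. ennreal \<bar>Hfun f y0 \<rho> t c w\<bar> \<le> 1"
      using AE_nonneg
    proof eventually_elim
      case (elim w)
      then show ?case
        using abs_Hfun_le_1[OF rho_pos int rho_noninc K_pos val_bound rho_T K_T elim that]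
        by (simp add: ennreal_leI)
    qed
    then have "(\<integral>\<^sup>+ w. ennreal \<bar>Hfun f y0 \<rho> t c w\<bar> \<partial>Omega \<rho>)
        \<le> (\<integral>\<^sup>+ w. 1 \<partial>(Omega \<rho> :: (nat list \<Rightarrow> real \<times> 'd) measure))"
      by (rule nn_integral_mono_AE)
    then show ?thesis
      by (simp add: Omega.emeasure_space_1)
  qed
  then have "(SUP c. SUP t\<in>{0..T}. \<integral>\<^sup>+ w. ennreal \<bar>Hfun f y0 \<rho> t c w\<bar> \<partial>Omega \<rho>) \<le> 1"
    by (intro SUP_least) auto
  with bound show ?thesis
    by (auto simp: le_less_trans)
qed

end
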